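(* Let $G=(V,E)$ be a finite, simple, connected $K_w$-minor-free graph and $U\subseteq V$ with $|U|\ge\max(w,4)$. Let $a\in U$ be a $U$-good node with witnessing set $U_a$ and write $\epsilon=\epsilon_U$. Then for every $b\in U_a$ there exist at least $\lceil\epsilon(|U|-2)\rceil$ nodes $c\in U$ such that, for each of them, for at least $\lceil\epsilon(|U|-3)\rceil$ nodes $d\in U$ the set $\{(a,b),(c,d)\}$ is a good quadruple.
   Context: The interval $I(u,v)$ is the set of nodes on at least one shortest $u$–$v$ path in $G$. A quadruple in $U$ is a set $\{(a,b),(c,d)\}$ of two unordered pairs with $a,b,c,d\in U$ distinct; it is good if $I(a,b)\cap I(c,d)\ne\emptyset$. Let $q(U)$ and $q_{\mathrm{good}}(U)$ be the numbers of quadruples and good quadruples in $U$, and $\epsilon_U=q_{\mathrm{good}}(U)/(8q(U))$. A node $a\in U$ is $U$-good if there is a subset $U_a\subseteq U$ (a witnessing set) of size at least $\lceil 4\epsilon_U(|U|-1)\rceil$ such that for every $b\in U_a$ the number of pairs $c,d\in U$ for which $\{(a,b),(c,d)\}$ is a good quadruple is at least $\lceil 4\epsilon_U\binom{|U|-2}{2}\rceil$. *)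

theory Defs
  imports Complex_Main
begin

definition simple_graph :: "'a set \<Rightarrow> ('a \<Rightarrow> 'a \<Rightarrow> bool) \<Rightarrow> bool" where
  "simple_graph V E \<longleftrightarrow> finite V \<and> (\<forall>x y. E x y \<longrightarrow> x \<in> V \<and> y \<in> V)
     \<and> (\<forall>x y. E x y \<longrightarrow> E y x) \<and> (\<forall>x. \<not> E x x)"

definition walk_in :: "('a \<Rightarrow> 'a \<Rightarrow> bool) \<Rightarrow> 'a set \<Rightarrow> 'a \<Rightarrow> 'a \<Rightarrow> 'a list \<Rightarrow> bool" where
  "walk_in E S u v xs \<longleftrightarrow> xs \<noteq> [] \<and> hd xs = u \<and> last xs = v \<and> set xs \<subseteq> S
     \<and> (\<forall>i. Suc i < length xs \<longrightarrow> E (xs ! i) (xs ! Suc i))"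

definition connected_set :: "('a \<Rightarrow> 'a \<Rightarrow> bool) \<Rightarrow> 'a set \<Rightarrow> bool" where
  "connected_set E S \<longleftrightarrow> (\<forall>u\<in>S. \<forall>v\<in>S. \<exists>xs. walk_in E S u v xs)"

definition connected_graph :: "'a set \<Rightarrow> ('a \<Rightarrow> 'a \<Rightarrow> bool) \<Rightarrow> bool" where
  "connected_graph V E \<longleftrightarrow> V \<noteq> {} \<and> connected_set E V"

definition has_clique_minor :: "'a set \<Rightarrow> ('a \<Rightarrow> 'a \<Rightarrow> bool) \<Rightarrow> nat \<Rightarrow> bool" where
  "has_clique_minor V E w \<longleftrightarrow> (\<exists>B :: nat \<Rightarrow> 'a set.
     (\<forall>i<w. B i \<noteq> {} \<and> B i \<subseteq> V \<and> connected_set E (B i))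
   \<and> (\<forall>i<w. \<forall>j<w. i \<noteq> j \<longrightarrow> B i \<inter> B j = {})
   \<and> (\<forall>i<w. \<forall>j<w. i \<noteq> j \<longrightarrow> (\<exists>x\<in>B i. \<exists>y\<in>B j. E x y)))"

definition gdist :: "'a set \<Rightarrow> ('a \<Rightarrow> 'a \<Rightarrow> bool) \<Rightarrow> 'a \<Rightarrow> 'a \<Rightarrow> nat" where
  "gdist V E u v = (LEAST n. \<exists>xs. walk_in E V u v xs \<and> length xs = Suc n)"

definition interval :: "'a set \<Rightarrow> ('a \<Rightarrow> 'a \<Rightarrow> bool) \<Rightarrow> 'a \<Rightarrow> 'a \<Rightarrow> 'a set" where
  "interval V E u v = {x. \<exists>xs. walk_in E V u v xs \<and> length xs = Suc (gdist V E u v) \<and> x \<in> set xs}"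

definition good_quad :: "'a set \<Rightarrow> ('a \<Rightarrow> 'a \<Rightarrow> bool) \<Rightarrow> 'a \<Rightarrow> 'a \<Rightarrow> 'a \<Rightarrow> 'a \<Rightarrow> bool" where
  "good_quad V E a b c d \<longleftrightarrow> interval V E a b \<inter> interval V E c d \<noteq> {}"

definition quads :: "'a set \<Rightarrow> 'a set set set" where
  "quads U = {{{a,b},{c,d}} | a b c d. a \<in> U \<and> b \<in> U \<and> c \<in> U \<and> d \<in> U \<and> distinct [a,b,c,d]}"

definition good_quads :: "'a set \<Rightarrow> ('a \<Rightarrow> 'a \<Rightarrow> bool) \<Rightarrow> 'a set \<Rightarrow> 'a set set set" where
  "good_quads V E U = {{{a,b},{c,d}} | a b c d. a \<in> U \<and> b \<in> U \<and> c \<in> U \<and> d \<in> U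
      \<and> distinct [a,b,c,d] \<and> good_quad V E a b c d}"

definition eps :: "'a set \<Rightarrow> ('a \<Rightarrow> 'a \<Rightarrow> bool) \<Rightarrow> 'a set \<Rightarrow> real" where
  "eps V E U = real (card (good_quads V E U)) / (8 * real (card (quads U)))"

definition good_partner_pairs :: "'a set \<Rightarrow> ('a \<Rightarrow> 'a \<Rightarrow> bool) \<Rightarrow> 'a set \<Rightarrow> 'a \<Rightarrow> 'a \<Rightarrow> nat" where
  "good_partner_pairs V E U a b = card {{c,d} | c d. c \<in> U \<and> d \<in> U \<and> distinct [a,b,c,d]
      \<and> good_quad V E a b c d}"

definition witnessing_set :: "'a set \<Rightarrow> ('a \<Rightarrow> 'a \<Rightarrow> bool) \<Rightarrow> 'a set \<Rightarrow> 'a \<Rightarrow> 'a set \<Rightarrow> bool" where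
  "witnessing_set V E U a Ua \<longleftrightarrow> a \<in> U \<and> Ua \<subseteq> U
     \<and> int (card Ua) \<ge> \<lceil>4 * eps V E U * (real (card U) - 1)\<rceil>
     \<and> (\<forall>b\<in>Ua. int (good_partner_pairs V E U a b)
            \<ge> \<lceil>4 * eps V E U * real ((card U - 2) choose 2)\<rceil>)"

definition U_good :: "'a set \<Rightarrow> ('a \<Rightarrow> 'a \<Rightarrow> bool) \<Rightarrow> 'a set \<Rightarrow> 'a \<Rightarrow> bool" where
  "U_good V E U a \<longleftrightarrow> (\<exists>Ua. witnessing_set V E U a Ua)"

end

theory Submission
  imports Defs
begin

text \<open>Only counting is involved; the graph enters solely through the predicate good_quad. Put n = |U|. The witnessing property gives at least
  4\<epsilon> C(n-2,2) = 2\<epsilon>(n-2)(n-3) good pairs {c,d} for (a,b), so the partner counts of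
  the n-2 nodes c \<noteq> a,b sum to at least that much. Each count is at most n-3, and the nodes
  whose count is below \<epsilon>(n-3) contribute at most \<epsilon>(n-3)(n-2) in total; hence at least
  \<epsilon>(n-2) nodes have count at least \<epsilon>(n-3). The ceilings in the statement are harmless
  because counts are integers.\<close>

lemma real_choose_two: "real (m choose 2) = real m * (real m - 1) / 2"
proof -
  have "even (m * (m - 1))"
    by (cases "even m") auto
  then have "real (m choose 2) = real (m * (m - 1)) / 2"
    by (simp add: choose_two real_of_nat_div)
  then show ?thesis
    by (cases m) (auto simp: algebra_simps)
qed

lemma sum_le_threshold_count:
  fixes f :: "'a \<Rightarrow> real"
  assumes "finite C" and "\<And>c. c \<in> C \<Longrightarrow> f c \<le> M" and "\<theta> \<ge> 0"
  shows "sum f C \<le> M * card {c \<in> C. \<theta> \<le> f c} + \<theta> * card C"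
proof -
  define L where "L = {c \<in> C. \<theta> \<le> f c}"
  define S where "S = {c \<in> C. f c < \<theta>}"
  have "sum f C = sum f L + sum f S"
    unfolding L_def S_def using assms(1) by (subst sum.union_disjoint[symmetric]) (auto intro: sum.cong)
  also have "sum f L \<le> M * card L"
    using sum_bounded_above[of L f M] assms(2) unfolding L_def by (auto simp: mult.commute)
  also have "sum f S \<le> \<theta> * card S"
    using sum_bounded_above[of S f \<theta>] unfolding S_def by (auto simp: mult.commute)
  also have "card S \<le> card C"
    unfolding S_def using assms(1) by (intro card_mono) auto
  then have "\<theta> * card S \<le> \<theta> * card C"
    using assms(3) by (intro mult_left_mono) auto
  finally show ?thesis unfolding L_def by simp
qed

lemma card_doubletons_le_sum:
  assumes "finite C" and "finite D"
  shows "card {{c, d} | c d. c \<in> C \<and> d \<in> D \<and> P c d} \<le> (\<Sum>c\<in>C. card {d \<in> D. P c d})"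
proof -
  have "{{c, d} | c d. c \<in> C \<and> d \<in> D \<and> P c d} = (\<lambda>(c, d). {c, d}) ` Sigma C (\<lambda>c. {d \<in> D. P c d})"
    by auto
  also have "card \<dots> \<le> card (Sigma C (\<lambda>c. {d \<in> D. P c d}))"
    using assms by (intro card_image_le) auto
  also have "\<dots> = (\<Sum>c\<in>C. card {d \<in> D. P c d})"
    using assms by (simp add: card_SigmaI)
  finally show ?thesis .
qed

lemma card_fourth_node_le:
  assumes "finite U" and "{a, b, c} \<subseteq> U"
  shows "card {d \<in> U. distinct [a, b, c, d] \<and> P d} \<le> card U - 3"
proof (cases "distinct [a, b, c]")
  case True
  have "card {d \<in> U. distinct [a, b, c, d] \<and> P d} \<le> card (U - {a, b, c})"
    using assms(1) by (intro card_mono) auto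
  also have "\<dots> = card U - 3"
    using True assms by (simp add: card_Diff_subset)
  finally show ?thesis .
next
  case False
  then show ?thesis by auto
qed

lemma many_nodes_with_many_partners:
  fixes U :: "'a set" and e :: real
  defines "n \<equiv> real (card U)"
  assumes "finite U" and "card U \<ge> 4" and "a \<in> U" and "b \<in> U" and "e \<ge> 0"
    and pairs: "2 * e * (n - 2) * (n - 3)
      \<le> card {{c, d} | c d. c \<in> U \<and> d \<in> U \<and> distinct [a, b, c, d] \<and> P c d}"
  shows "e * (n - 2) \<le> card {c \<in> U. e * (n - 3) \<le> card {d \<in> U. distinct [a, b, c, d] \<and> P c d}}"
proof (cases "a = b")
  case True
  then have "e * ((n - 2) * (n - 3)) \<le> 0"
    using pairs by (simp add: mult.assoc)
  moreover have "(n - 2) * (n - 3) > 0"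
    using assms(3) unfolding n_def by simp
  ultimately have "e = 0"
    using \<open>e \<ge> 0\<close> by (meson antisym mult_pos_pos not_le)
  then show ?thesis by simp
next
  case False
  define C where "C = U - {a, b}"
  define deg where "deg c = real (card {d \<in> U. distinct [a, b, c, d] \<and> P c d})" for c
  define G where "G = {c \<in> C. e * (n - 3) \<le> deg c}"
  have card_C: "real (card C) = n - 2"
    using False assms(2-5) unfolding C_def n_def by (simp add: card_Diff_subset)
  have deg_le: "deg c \<le> n - 3" if "c \<in> C" for c
    using card_fourth_node_le[of U a b c "P c"] that assms(2-5)
    unfolding deg_def C_def n_def by (simp add: of_nat_diff)
  have "{{c, d} | c d. c \<in> U \<and> d \<in> U \<and> distinct [a, b, c, d] \<and> P c d}
      = {{c, d} | c d. c \<in> C \<and> d \<in> U \<and> distinct [a, b, c, d] \<and> P c d}"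
    unfolding C_def by auto
  then have "2 * e * (n - 2) * (n - 3) \<le> sum deg C"
    using pairs card_doubletons_le_sum[of C U "\<lambda>c d. distinct [a, b, c, d] \<and> P c d"] assms(2)
    unfolding deg_def C_def by (simp add: of_nat_sum[symmetric] del: of_nat_sum)
  also have "sum deg C \<le> (n - 3) * card G + e * (n - 3) * (n - 2)"
    using sum_le_threshold_count[of C deg "n - 3" "e * (n - 3)"] deg_le assms(2,3,6) card_C
    unfolding G_def C_def n_def by simp
  finally have "(e * (n - 2)) * (n - 3) \<le> card G * (n - 3)"
    by (simp add: algebra_simps)
  moreover have "n - 3 > 0"
    using assms(3) unfolding n_def by simp
  ultimately have "e * (n - 2) \<le> card G"
    by simp
  also have "card G \<le> card {c \<in> U. e * (n - 3) \<le> deg c}"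
    unfolding G_def C_def using assms(2) by (intro card_mono) auto
  finally show ?thesis
    unfolding deg_def by simp
qed

theorem mainTheorem8:
  fixes V :: "'a set" and E :: "'a \<Rightarrow> 'a \<Rightarrow> bool" and w :: nat
    and U Ua :: "'a set" and a :: 'a
  assumes "simple_graph V E"
    and "connected_graph V E"
    and "\<not> has_clique_minor V E w"
    and "U \<subseteq> V"
    and "card U \<ge> max w 4"
    and "witnessing_set V E U a Ua"
  shows "\<forall>b\<in>Ua. int (card {c \<in> U.
            int (card {d \<in> U. distinct [a,b,c,d] \<and> good_quad V E a b c d})
              \<ge> \<lceil>eps V E U * (real (card U) - 3)\<rceil>})
         \<ge> \<lceil>eps V E U * (real (card U) - 2)\<rceil>"
proof
  fix b assume "b \<in> Ua"
  define n where "n = real (card U)"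
  have "eps V E U \<ge> 0"
    unfolding eps_def by simp
  have "card U \<ge> 4" and "finite U"
    using assms(5) by (auto intro: card_ge_0_finite)
  have "a \<in> U" and "b \<in> U" and witness: "\<lceil>4 * eps V E U * real ((card U - 2) choose 2)\<rceil>
      \<le> int (good_partner_pairs V E U a b)"
    using assms(6) \<open>b \<in> Ua\<close> unfolding witnessing_set_def by auto
  have "real ((card U - 2) choose 2) = (n - 2) * (n - 3) / 2"
    using \<open>card U \<ge> 4\<close> unfolding n_def by (simp add: real_choose_two of_nat_diff)
  then have "2 * eps V E U * (n - 2) * (n - 3) = 4 * eps V E U * real ((card U - 2) choose 2)"
    by simp
  also have "\<dots> \<le> real (good_partner_pairs V E U a b)"
    using witness by (simp add: ceiling_le_iff)
  finally have "eps V E U * (n - 2) \<le> card {c \<in> U. eps V E U * (n - 3)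
      \<le> card {d \<in> U. distinct [a, b, c, d] \<and> good_quad V E a b c d}}"
    using many_nodes_with_many_partners[of U a b "eps V E U" "good_quad V E a b"]
      \<open>eps V E U \<ge> 0\<close> \<open>card U \<ge> 4\<close> \<open>finite U\<close> \<open>a \<in> U\<close> \<open>b \<in> U\<close>
    unfolding good_partner_pairs_def n_def by simp
  then show "int (card {c \<in> U.
            int (card {d \<in> U. distinct [a,b,c,d] \<and> good_quad V E a b c d})
              \<ge> \<lceil>eps V E U * (real (card U) - 3)\<rceil>})
         \<ge> \<lceil>eps V E U * (real (card U) - 2)\<rceil>"
    unfolding n_def by (simp add: ceiling_le_iff)
qed

end
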